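(* Let $A=\{a_1,\ldots,a_k\}$ be a multiset of $k$ nonnegative integers (not necessarily distinct). If a tree $T$ has order at most $\sum_{i=1}^k a_i+\max\{a_i : 1\le i\le k\}-1$, then $T$ is $A$-burnable.
   Context: For a vertex $u$ of a graph and an integer $m$, $N_m[u]$ denotes the set of vertices at distance at most $m$ from $u$ (so $N_m[u]=\emptyset$ if $m<0$). For a multiset $A$ of integers $a_1,\ldots,a_k$, a graph $G$ is called $A$-burnable if there exist $k$ vertices $v_1,\ldots,v_k$ of $G$ (not necessarily distinct) such that $V(G)\subseteq\bigcup_{i=1}^k N_{a_i-1}[v_i]$. The order of a graph is its number of vertices. *)

theory Defs
  imports Main "HOL-Library.Multiset"
begin

definition simple_graph :: "'a set \<Rightarrow> ('a \<Rightarrow> 'a \<Rightarrow> bool) \<Rightarrow> bool" where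
  "simple_graph V E \<longleftrightarrow> finite V \<and> (\<forall>u v. E u v \<longrightarrow> u \<in> V \<and> v \<in> V)
     \<and> (\<forall>u v. E u v \<longrightarrow> E v u) \<and> (\<forall>u. \<not> E u u)"

definition walk :: "('a \<Rightarrow> 'a \<Rightarrow> bool) \<Rightarrow> 'a list \<Rightarrow> bool" where
  "walk E xs \<longleftrightarrow> xs \<noteq> [] \<and> (\<forall>i. Suc i < length xs \<longrightarrow> E (xs ! i) (xs ! Suc i))"

definition connected_graph :: "'a set \<Rightarrow> ('a \<Rightarrow> 'a \<Rightarrow> bool) \<Rightarrow> bool" where
  "connected_graph V E \<longleftrightarrow> (\<forall>u\<in>V. \<forall>v\<in>V. \<exists>xs. walk E xs \<and> hd xs = u \<and> last xs = v)"

definition is_cycle :: "('a \<Rightarrow> 'a \<Rightarrow> bool) \<Rightarrow> 'a list \<Rightarrow> bool" where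
  "is_cycle E cs \<longleftrightarrow> length cs \<ge> 3 \<and> distinct cs \<and> walk E cs \<and> E (last cs) (hd cs)"

definition tree :: "'a set \<Rightarrow> ('a \<Rightarrow> 'a \<Rightarrow> bool) \<Rightarrow> bool" where
  "tree V E \<longleftrightarrow> simple_graph V E \<and> V \<noteq> {} \<and> connected_graph V E \<and> (\<nexists>cs. is_cycle E cs)"

text \<open>N_m[u]: vertices at distance at most m from u (empty if m < 0).
  dist(u,v) \<le> m iff there is a walk from u to v with at most m edges.\<close>
definition closed_nbhd :: "'a set \<Rightarrow> ('a \<Rightarrow> 'a \<Rightarrow> bool) \<Rightarrow> int \<Rightarrow> 'a \<Rightarrow> 'a set" where
  "closed_nbhd V E m u = {v \<in> V. 0 \<le> m \<and> u \<in> V \<and>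
      (\<exists>xs. walk E xs \<and> hd xs = u \<and> last xs = v \<and> int (length xs) \<le> m + 1)}"

text \<open>A-burnable for a multiset A = {a_1,...,a_k}: there is an assignment of a vertex
  to each element of A (given as a list enumerating the multiset).\<close>
definition burnable :: "'a set \<Rightarrow> ('a \<Rightarrow> 'a \<Rightarrow> bool) \<Rightarrow> nat multiset \<Rightarrow> bool" where
  "burnable V E A \<longleftrightarrow> (\<exists>as vs. mset as = A \<and> length vs = length as \<and> set vs \<subseteq> V \<and>
      V \<subseteq> (\<Union>i<length as. closed_nbhd V E (int (as ! i) - 1) (vs ! i)))"

end

theory Submission
  imports Defs
begin

text \<open>
  Take a root r; if some vertex lies at distance at least a \<ge> 1 from r, pick a
  vertex x farthest from r and the vertex v at distance a - 1 from x on a shortest path from r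
  to x. The vertices y with d(r,y) = d(r,v) + d(v,y) lie in the ball of radius a - 1 around v,
  there are at least a of them (those on the path from v to x), and deleting them leaves a
  connected graph containing r. So a part of size a burns them and the remaining parts burn the
  rest by induction. When only the largest part M is left, the graph has fewer than 2M
  vertices; deleting such a set for a = M leaves fewer than M vertices, all within distance
  M - 1 of v through the neighbour of v on the path.
\<close>

lemma walk_iff_relpowp:
  "(\<exists>xs. walk E xs \<and> hd xs = u \<and> last xs = v \<and> length xs = Suc n) \<longleftrightarrow> (E ^^ n) u v"
proof
  assume "\<exists>xs. walk E xs \<and> hd xs = u \<and> last xs = v \<and> length xs = Suc n"
  then obtain xs where xs: "walk E xs" "hd xs = u" "last xs = v" "length xs = Suc n"
    by blast
  then have "xs ! 0 = u" "xs ! n = v" "\<forall>i<n. E (xs ! i) (xs ! Suc i)"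
    by (auto simp: hd_conv_nth last_conv_nth walk_def)
  then show "(E ^^ n) u v"
    unfolding relpowp_fun_conv by blast
next
  assume "(E ^^ n) u v"
  then obtain f where "f 0 = u" "f n = v" "\<forall>i<n. E (f i) (f (Suc i))"
    unfolding relpowp_fun_conv by blast
  then show "\<exists>xs. walk E xs \<and> hd xs = u \<and> last xs = v \<and> length xs = Suc n"
    by (intro exI[of _ "map f [0..<Suc n]"]) (auto simp: walk_def hd_map last_map simp del: upt_Suc)
qed

lemma closed_nbhd_eq:
  "closed_nbhd V E m u = {v \<in> V. u \<in> V \<and> (\<exists>n. int n \<le> m \<and> (E ^^ n) u v)}"
proof -
  have "(\<exists>xs. walk E xs \<and> hd xs = u \<and> last xs = v \<and> int (length xs) \<le> m + 1) \<longleftrightarrow>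
        (\<exists>n. int n \<le> m \<and> (\<exists>xs. walk E xs \<and> hd xs = u \<and> last xs = v \<and> length xs = Suc n))"
    for v
  proof
    assume "\<exists>xs. walk E xs \<and> hd xs = u \<and> last xs = v \<and> int (length xs) \<le> m + 1"
    then obtain xs where "walk E xs" "hd xs = u" "last xs = v" "int (length xs) \<le> m + 1"
      by blast
    moreover have "length xs = Suc (length xs - 1)"
      using \<open>walk E xs\<close> by (simp add: walk_def)
    ultimately show "\<exists>n. int n \<le> m \<and> (\<exists>xs. walk E xs \<and> hd xs = u \<and> last xs = v \<and> length xs = Suc n)"
      by (intro exI[of _ "length xs - 1"]) auto
  qed auto
  then show ?thesis
    unfolding closed_nbhd_def walk_iff_relpowp by auto
qed

text \<open>Only meaningful for reachable pairs; otherwise \<open>LEAST\<close> ranges over an empty set.\<close>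

definition gdist :: "('a \<Rightarrow> 'a \<Rightarrow> bool) \<Rightarrow> 'a \<Rightarrow> 'a \<Rightarrow> nat" where
  "gdist E u v = (LEAST n. (E ^^ n) u v)"

lemma gdist_le: "(E ^^ n) u v \<Longrightarrow> gdist E u v \<le> n"
  unfolding gdist_def by (rule Least_le)

lemma relpowp_gdist: "E\<^sup>*\<^sup>* u v \<Longrightarrow> (E ^^ gdist E u v) u v"
  unfolding gdist_def by (rule LeastI_ex) (rule rtranclp_imp_relpowp)

lemma gdist_self [simp]: "gdist E u u = 0"
  using gdist_le[where n = 0 and u = u and v = u] by simp

lemma gdist_eq_0_iff: "E\<^sup>*\<^sup>* u v \<Longrightarrow> gdist E u v = 0 \<longleftrightarrow> u = v"
  using relpowp_gdist[of E u v] by auto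

lemma gdist_triangle:
  assumes "E\<^sup>*\<^sup>* u v" "E\<^sup>*\<^sup>* v w"
  shows "gdist E u w \<le> gdist E u v + gdist E v w"
  by (rule gdist_le) (rule relpowp_trans[OF relpowp_gdist relpowp_gdist, OF assms])

lemma relpowp_symp: "symp E \<Longrightarrow> (E ^^ n) u v \<Longrightarrow> (E ^^ n) v u"
proof (induction n arbitrary: v)
  case (Suc n)
  then obtain w where "(E ^^ n) u w" "E w v"
    by (blast elim: relpowp_Suc_E)
  then show ?case
    using Suc by (blast intro: relpowp_Suc_I2 dest: sympD)
qed simp

lemma gdist_midpoint:
  assumes "E\<^sup>*\<^sup>* u w" "t \<le> gdist E u w"
  obtains z where "(E ^^ t) u z" "(E ^^ (gdist E u w - t)) z w"
    "gdist E u z = t" "gdist E z w = gdist E u w - t"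
proof -
  have "(E ^^ (t + (gdist E u w - t))) u w"
    using relpowp_gdist[OF assms(1)] assms(2) by simp
  then obtain z where z: "(E ^^ t) u z" "(E ^^ (gdist E u w - t)) z w"
    unfolding relpowp_add by blast
  have "gdist E u w \<le> gdist E u z + gdist E z w"
    using z by (blast intro: gdist_triangle relpowp_imp_rtranclp)
  moreover have "gdist E u z \<le> t" "gdist E z w \<le> gdist E u w - t"
    using z by (auto intro: gdist_le)
  ultimately show thesis
    using that z assms(2) by simp
qed

definition induced :: "('a \<Rightarrow> 'a \<Rightarrow> bool) \<Rightarrow> 'a set \<Rightarrow> 'a \<Rightarrow> 'a \<Rightarrow> bool" where
  "induced E W u v \<longleftrightarrow> E u v \<and> u \<in> W \<and> v \<in> W"

locale finite_connected_graph =
  fixes V :: "'a set" and E :: "'a \<Rightarrow> 'a \<Rightarrow> bool"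
  assumes finite_vertices: "finite V"
    and edge_vertices: "E u v \<Longrightarrow> u \<in> V \<and> v \<in> V"
    and symp_edges: "symp E"
    and connected: "u \<in> V \<Longrightarrow> v \<in> V \<Longrightarrow> E\<^sup>*\<^sup>* u v"
begin

lemma relpowp_in_vertices: "(E ^^ n) u v \<Longrightarrow> u \<in> V \<Longrightarrow> v \<in> V"
  by (induction n arbitrary: v) (auto elim: relpowp_Suc_E dest: edge_vertices)

lemma gdist_triangle_vertices:
  "u \<in> V \<Longrightarrow> v \<in> V \<Longrightarrow> w \<in> V \<Longrightarrow> gdist E u w \<le> gdist E u v + gdist E v w"
  by (blast intro: gdist_triangle connected)

lemma mem_closed_nbhdI: "u \<in> V \<Longrightarrow> (E ^^ n) u v \<Longrightarrow> n < a \<Longrightarrow> v \<in> closed_nbhd V E (int a - 1) u"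
  unfolding closed_nbhd_eq by (auto intro: relpowp_in_vertices)

lemma gdist_less_card:
  assumes u: "u \<in> V" and v: "v \<in> V"
  shows "gdist E u v < card V"
proof -
  have "{..gdist E u v} \<subseteq> gdist E u ` V"
  proof
    fix t assume "t \<in> {..gdist E u v}"
    then obtain z where "(E ^^ t) u z" "gdist E u z = t"
      using gdist_midpoint[OF connected[OF u v]] by auto
    then show "t \<in> gdist E u ` V"
      using u by (auto intro: relpowp_in_vertices)
  qed
  then have "card {..gdist E u v} \<le> card V"
    using card_mono[OF finite_imageI[OF finite_vertices]] card_image_le[OF finite_vertices]
    by (meson le_trans)
  then show ?thesis by simp
qed


text \<open>In a tree rooted at \<open>r\<close>, the shadow of \<open>v\<close> is the subtree below \<open>v\<close>.\<close>

definition shadow :: "'a \<Rightarrow> 'a \<Rightarrow> 'a set" where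
  "shadow r v = {y \<in> V. gdist E r y = gdist E r v + gdist E v y}"

lemma gdist_less_card_shadow:
  assumes r: "r \<in> V" and v: "v \<in> V" and x: "x \<in> shadow r v"
  shows "gdist E v x < card (shadow r v)"
proof -
  have xV: "x \<in> V" and rx: "gdist E r x = gdist E r v + gdist E v x"
    using x unfolding shadow_def by auto
  have "{..gdist E v x} \<subseteq> gdist E v ` shadow r v"
  proof
    fix t assume "t \<in> {..gdist E v x}"
    then obtain z where z: "(E ^^ t) v z" "gdist E v z = t" "gdist E z x = gdist E v x - t"
      using gdist_midpoint[OF connected[OF v xV]] by auto
    have zV: "z \<in> V"
      using z(1) v by (rule relpowp_in_vertices)
    have "gdist E r z \<le> gdist E r v + gdist E v z" "gdist E r x \<le> gdist E r z + gdist E z x"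
      using r v xV zV by (auto intro: gdist_triangle_vertices)
    then have "z \<in> shadow r v"
      using zV z(2,3) rx \<open>t \<in> {..gdist E v x}\<close> unfolding shadow_def by auto
    then show "t \<in> gdist E v ` shadow r v"
      using z(2) by blast
  qed
  moreover have "finite (shadow r v)"
    using finite_vertices unfolding shadow_def by simp
  ultimately have "card {..gdist E v x} \<le> card (shadow r v)"
    by (meson card_image_le card_mono finite_imageI le_trans)
  then show ?thesis by simp
qed

lemma root_notin_shadow: "r \<in> V \<Longrightarrow> v \<in> V \<Longrightarrow> r \<noteq> v \<Longrightarrow> r \<notin> shadow r v"
  using gdist_eq_0_iff[OF connected[of r v]] unfolding shadow_def by auto

lemma shadow_complement_connected:
  assumes r: "r \<in> V" and v: "v \<in> V" and "r \<noteq> v"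
  shows "finite_connected_graph (V - shadow r v) (induced E (V - shadow r v))"
proof -
  let ?W = "V - shadow r v"
  let ?F = "induced E ?W"
  have symp_F: "symp ?F"
    unfolding induced_def by (rule sympI) (auto dest: sympD[OF symp_edges])
  have reaches_root: "?F\<^sup>*\<^sup>* y r" if "y \<in> ?W" "gdist E r y = n" for y n
    using that
  proof (induction n arbitrary: y)
    case 0
    then have "r = y"
      using gdist_eq_0_iff[OF connected[OF r]] by auto
    then show ?case
      by simp
  next
    case (Suc n)
    then have yV: "y \<in> V" and y: "y \<notin> shadow r v"
      by auto
    from Suc.prems relpowp_gdist[OF connected[OF r yV]]
    obtain w where rw: "(E ^^ n) r w" and wy: "E w y"
      by (auto elim: relpowp_Suc_E)
    have wV: "w \<in> V"
      using edge_vertices[OF wy] by blast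
    have "gdist E w y \<le> 1"
      by (rule gdist_le) (simp only: relpowp_1 wy)
    moreover have "gdist E r y \<le> gdist E r w + gdist E w y" "gdist E r w \<le> n"
      using r wV yV rw by (auto intro: gdist_triangle_vertices gdist_le)
    ultimately have rw_dist: "gdist E r w = n"
      using Suc.prems by linarith
    have "w \<notin> shadow r v"
    proof
      assume "w \<in> shadow r v"
      then have "gdist E r w = gdist E r v + gdist E v w"
        unfolding shadow_def by simp
      moreover have "gdist E v y \<le> gdist E v w + gdist E w y"
        "gdist E r y \<le> gdist E r v + gdist E v y"
        using r v wV yV by (auto intro: gdist_triangle_vertices)
      ultimately have "y \<in> shadow r v"
        using yV rw_dist Suc.prems \<open>gdist E w y \<le> 1\<close> unfolding shadow_def by auto
      with y show False ..
    qed
    then have "?F\<^sup>*\<^sup>* w r" "?F y w"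
      using Suc.IH[of w] rw_dist wV yV y sympD[OF symp_edges wy] unfolding induced_def by auto
    then show ?case
      by (rule converse_rtranclp_into_rtranclp[rotated])
  qed
  show ?thesis
  proof
    show "finite ?W"
      using finite_vertices by simp
    show "symp ?F"
      by (rule symp_F)
    show "?F u w \<Longrightarrow> u \<in> ?W \<and> w \<in> ?W" for u w
      unfolding induced_def by simp
    fix u w assume "u \<in> ?W" "w \<in> ?W"
    then have "?F\<^sup>*\<^sup>* u r" "?F\<^sup>*\<^sup>* r w"
      using reaches_root sympD[OF symp_rtranclp[OF symp_F]] by blast+
    then show "?F\<^sup>*\<^sup>* u w"
      by (rule rtranclp_trans)
  qed
qed


lemma large_shadow_in_ball:
  assumes r: "r \<in> V" and y: "y \<in> V" and a: "1 \<le> a" "a \<le> gdist E r y"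
  obtains v p where "v \<in> V" "v \<noteq> r" "a \<le> card (shadow r v)"
    "shadow r v \<subseteq> closed_nbhd V E (int a - 1) v" "p \<in> V - shadow r v" "E p v"
proof -
  obtain x where x: "x \<in> V" and farthest: "\<forall>z\<in>V. gdist E r z \<le> gdist E r x"
    using ex_has_greatest_nat[of "\<lambda>z. z \<in> V" r "gdist E r" "card V"] r gdist_less_card by blast
  define c where "c = gdist E r x - (a - 1)"
  have "a \<le> gdist E r x"
    using a farthest y by (meson le_trans)
  then have c: "1 \<le> c" "c \<le> gdist E r x" "gdist E r x - c = a - 1"
    using a unfolding c_def by auto
  obtain v where rv: "(E ^^ c) r v" and rv_dist: "gdist E r v = c" and vx: "gdist E v x = a - 1"
    using gdist_midpoint[OF connected[OF r x] c(2)] c(3) by metis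
  have v: "v \<in> V"
    using rv r by (rule relpowp_in_vertices)
  have "v \<noteq> r"
    using rv_dist c(1) by auto
  have "x \<in> shadow r v"
    using x rv_dist vx c unfolding shadow_def by simp
  then have "a \<le> card (shadow r v)"
    using gdist_less_card_shadow[OF r v] vx by fastforce
  have ball: "shadow r v \<subseteq> closed_nbhd V E (int a - 1) v"
  proof
    fix z assume z: "z \<in> shadow r v"
    then have zV: "z \<in> V" and rz: "gdist E r z = c + gdist E v z"
      using rv_dist unfolding shadow_def by auto
    have "gdist E r z \<le> gdist E r x"
      using farthest zV by blast
    then have "gdist E v z < a"
      using rz c(3) a(1) by linarith
    with v show "z \<in> closed_nbhd V E (int a - 1) v"
      using relpowp_gdist[OF connected[OF v zV]] by (blast intro: mem_closed_nbhdI)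
  qed
  obtain c' where c': "c = Suc c'"
    using c(1) by (cases c) auto
  obtain p where rp: "(E ^^ c') r p" and pv: "E p v"
    using rv unfolding c' by (rule relpowp_Suc_E)
  have "p \<in> V - shadow r v"
    using gdist_le[OF rp] edge_vertices[OF pv] rv_dist c' unfolding shadow_def by auto
  then show thesis
    using that v \<open>v \<noteq> r\<close> \<open>a \<le> card (shadow r v)\<close> ball pv by blast
qed

lemma center_of_small_graph:
  assumes "V \<noteq> {}" and small: "card V < 2 * M"
  obtains v where "v \<in> V" "V \<subseteq> closed_nbhd V E (int M - 1) v"
proof -
  obtain r where r: "r \<in> V"
    using assms(1) by blast
  show thesis
  proof (cases "\<forall>y\<in>V. gdist E r y < M")
    case True
    then have "V \<subseteq> closed_nbhd V E (int M - 1) r"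
      using r relpowp_gdist[OF connected[OF r]] by (blast intro: mem_closed_nbhdI)
    with r that show thesis by blast
  next
    case False
    then obtain y where y: "y \<in> V" "M \<le> gdist E r y"
      by (auto simp: not_less)
    have "1 \<le> M"
      using small by simp
    then obtain v p where v: "v \<in> V" "v \<noteq> r" and card_S: "M \<le> card (shadow r v)"
      and ball: "shadow r v \<subseteq> closed_nbhd V E (int M - 1) v"
      and p: "p \<in> V - shadow r v" "E p v"
      using large_shadow_in_ball[OF r y(1) _ y(2)] by blast
    let ?W = "V - shadow r v"
    let ?F = "induced E ?W"
    interpret sub: finite_connected_graph ?W ?F
      using shadow_complement_connected[OF r v(1)] v(2) by simp
    have "shadow r v \<subseteq> V"
      unfolding shadow_def by blast
    then have "card ?W = card V - card (shadow r v)"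
      using finite_vertices by (meson card_Diff_subset finite_subset)
    then have "card ?W < M"
      using small card_S by linarith
    have "?W \<subseteq> closed_nbhd V E (int M - 1) v"
    proof
      fix z assume z: "z \<in> ?W"
      define k where "k = gdist ?F z p"
      have Fzp: "(?F ^^ k) z p" and "k < card ?W"
        unfolding k_def using relpowp_gdist[OF sub.connected] sub.gdist_less_card z p(1) by blast+
      from Fzp have "(E ^^ k) z p"
        by (rule relpowp_mono[rotated]) (simp add: induced_def)
      then have "(E ^^ Suc k) z v"
        using p(2) by (rule relpowp_Suc_I)
      then have "(E ^^ Suc k) v z"
        by (rule relpowp_symp[OF symp_edges])
      moreover have "Suc k < M"
        using \<open>k < card ?W\<close> \<open>card ?W < M\<close> by simp
      ultimately show "z \<in> closed_nbhd V E (int M - 1) v"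
        by (rule mem_closed_nbhdI[OF v(1)])
    qed
    with ball v(1) that show thesis by blast
  qed
qed

end

lemma closed_nbhd_mono:
  "V' \<subseteq> V \<Longrightarrow> (\<And>x y. E' x y \<Longrightarrow> E x y) \<Longrightarrow> closed_nbhd V' E' m u \<subseteq> closed_nbhd V E m u"
  unfolding closed_nbhd_eq by (blast intro: relpowp_mono)

lemma burnable_if_ball_covers:
  assumes "a \<in># A" "v \<in> V" "V \<subseteq> closed_nbhd V E (int a - 1) v"
  shows "burnable V E A"
proof -
  obtain as where as: "mset as = A - {#a#}"
    using ex_mset by blast
  let ?vs = "replicate (length (a # as)) v"
  have "V \<subseteq> (\<Union>i<length (a # as). closed_nbhd V E (int ((a # as) ! i) - 1) (?vs ! i))"
    using assms(3) by fastforce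
  then show ?thesis
    unfolding burnable_def using as assms(1,2) by (intro exI[of _ "a # as"] exI[of _ ?vs]) auto
qed

lemma burnable_add_mset:
  assumes B: "burnable V' E' B" and V': "V' \<subseteq> V" and E': "\<And>u w. E' u w \<Longrightarrow> E u w"
    and v: "v \<in> V" and rest: "V - V' \<subseteq> closed_nbhd V E (int a - 1) v"
  shows "burnable V E (add_mset a B)"
proof -
  obtain as vs where as: "mset as = B" "length vs = length as" "set vs \<subseteq> V'"
    and cover: "V' \<subseteq> (\<Union>i<length as. closed_nbhd V' E' (int (as ! i) - 1) (vs ! i))"
    using B unfolding burnable_def by blast
  have mono: "closed_nbhd V' E' m u \<subseteq> closed_nbhd V E m u" for m u
    by (rule closed_nbhd_mono[OF V']) (rule E')
  have "V \<subseteq> (\<Union>i<length (a # as). closed_nbhd V E (int ((a # as) ! i) - 1) ((v # vs) ! i))"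
  proof
    fix y assume y: "y \<in> V"
    show "y \<in> (\<Union>i<length (a # as). closed_nbhd V E (int ((a # as) ! i) - 1) ((v # vs) ! i))"
    proof (cases "y \<in> V'")
      case True
      then obtain i where i: "i < length as" "y \<in> closed_nbhd V' E' (int (as ! i) - 1) (vs ! i)"
        using cover by blast
      then have "y \<in> closed_nbhd V E (int ((a # as) ! Suc i) - 1) ((v # vs) ! Suc i)"
        using mono by auto
      then show ?thesis
        using i(1) by (intro UN_I[of "Suc i"]) auto
    next
      case False
      then show ?thesis
        using rest y by (intro UN_I[of 0]) auto
    qed
  qed
  then show ?thesis
    unfolding burnable_def using as V' v by (intro exI[of _ "a # as"] exI[of _ "v # vs"]) auto
qed


lemma burnable_if_card_less:
  assumes "finite_connected_graph V E" "V \<noteq> {}" "A \<noteq> {#}"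
    and "card V < sum_mset A + Max (set_mset A)"
  shows "burnable V E A"
  using assms
proof (induction "size A" arbitrary: A V E rule: less_induct)
  case less
  interpret finite_connected_graph V E
    by (rule less.prems(1))
  define M where "M = Max (set_mset A)"
  have MA: "M \<in># A"
    unfolding M_def using less.prems(3) by simp
  show ?case
  proof (cases "A = {#M#}")
    case True
    then have "sum_mset A = M"
      by simp
    then have "card V < 2 * M"
      using less.prems(4) unfolding M_def by linarith
    then obtain v where "v \<in> V" "V \<subseteq> closed_nbhd V E (int M - 1) v"
      using center_of_small_graph less.prems(2) by blast
    then show ?thesis
      by (rule burnable_if_ball_covers[OF MA])
  next
    case False
    then have "A - {#M#} \<noteq> {#}"
      using MA by (metis add_mset_remove_trivial_If diff_single_trivial)
    then obtain a where a: "a \<in># A - {#M#}"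
      by blast
    have aA: "a \<in># A"
      using a by (rule in_diffD)
    define B where "B = A - {#a#}"
    have A: "A = add_mset a B"
      unfolding B_def using aA by simp
    have "M \<in># B"
      using a MA unfolding B_def by (cases "a = M") (auto simp: in_diff_count)
    then have B: "B \<noteq> {#}" "Max (set_mset B) = M"
      using A unfolding M_def by (auto intro!: Max_eqI)
    have size_B: "size B < size A"
      using A by simp
    have card_V: "card V < a + (sum_mset B + Max (set_mset B))"
      using less.prems(4) A B(2) unfolding M_def by simp
    obtain r where r: "r \<in> V"
      using less.prems(2) by blast
    consider (zero) "a = 0" | (covered) "\<forall>y\<in>V. gdist E r y < a"
      | (far) y where "y \<in> V" "a \<le> gdist E r y" "1 \<le> a"
      by (metis less_one not_le)
    then show ?thesis
    proof cases
      case zero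
      then have "burnable V E B"
        using less.hyps[OF size_B less.prems(1,2) B(1)] card_V by simp
      then show ?thesis
        unfolding A by (rule burnable_add_mset) (use r in auto)
    next
      case covered
      then have "V \<subseteq> closed_nbhd V E (int a - 1) r"
        using r relpowp_gdist[OF connected[OF r]] by (blast intro: mem_closed_nbhdI)
      with aA r show ?thesis
        by (rule burnable_if_ball_covers)
    next
      case far
      then obtain v p where v: "v \<in> V" "v \<noteq> r" and card_S: "a \<le> card (shadow r v)"
        and ball: "shadow r v \<subseteq> closed_nbhd V E (int a - 1) v"
        using large_shadow_in_ball[OF r] by metis
      let ?W = "V - shadow r v"
      have "shadow r v \<subseteq> V"
        unfolding shadow_def by blast
      then have "card ?W = card V - card (shadow r v)" "card (shadow r v) \<le> card V"
        using finite_vertices by (meson card_Diff_subset card_mono finite_subset)+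
      then have "card ?W < sum_mset B + Max (set_mset B)"
        using card_V card_S by linarith
      moreover have "?W \<noteq> {}"
        using root_notin_shadow[OF r v(1)] v(2) r by blast
      moreover have "finite_connected_graph ?W (induced E ?W)"
        using shadow_complement_connected[OF r v(1)] v(2) by simp
      ultimately have "burnable ?W (induced E ?W) B"
        using less.hyps[OF size_B _ _ B(1)] by blast
      then show ?thesis
        unfolding A by (rule burnable_add_mset) (use v(1) ball in \<open>auto simp: induced_def\<close>)
    qed
  qed
qed

lemma finite_connected_graph_if_tree:
  assumes "tree V E"
  shows "finite_connected_graph V E"
proof
  have simple: "simple_graph V E" and conn: "connected_graph V E"
    using assms unfolding tree_def by auto
  then show "finite V" "E u v \<Longrightarrow> u \<in> V \<and> v \<in> V" "symp E" for u v
    unfolding simple_graph_def by (auto intro: sympI)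
  fix u v assume "u \<in> V" "v \<in> V"
  then obtain xs where "walk E xs" "hd xs = u" "last xs = v"
    using conn unfolding connected_graph_def by blast
  moreover have "length xs = Suc (length xs - 1)"
    using \<open>walk E xs\<close> by (simp add: walk_def)
  ultimately have "(E ^^ (length xs - 1)) u v"
    unfolding walk_iff_relpowp[symmetric] by blast
  then show "E\<^sup>*\<^sup>* u v"
    by (rule relpowp_imp_rtranclp)
qed

theorem lemma1:
  fixes V :: "'a set" and E :: "'a \<Rightarrow> 'a \<Rightarrow> bool" and A :: "nat multiset"
  assumes "A \<noteq> {#}"
    and "tree V E"
    and "int (card V) \<le> int (sum_mset A) + int (Max (set_mset A)) - 1"
  shows "burnable V E A"
proof (rule burnable_if_card_less)
  show "finite_connected_graph V E"
    using assms(2) by (rule finite_connected_graph_if_tree)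
  show "V \<noteq> {}"
    using assms(2) unfolding tree_def by simp
  show "card V < sum_mset A + Max (set_mset A)"
    using assms(3) by linarith
qed (rule assms(1))

end
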